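(* In the algebra $\mathcal O_q$ defined in the context, with $B_\delta=q^{-2}\mathcal W_1\mathcal W_0-\mathcal W_0\mathcal W_1$, the following hold for all integers $n\ge1$: $$\mathcal W_{-n}=\mathcal W_n-\frac{(q-q^{-1})\mathcal W_0\tilde{\mathcal G}_n}{(q^2-q^{-2})^2}+\frac{q^2[B_\delta,\mathcal W_{1-n}]}{(q^2-q^{-2})^2},\qquad \mathcal W_{n+1}=\mathcal W_{1-n}-\frac{(q-q^{-1})\mathcal W_1\tilde{\mathcal G}_n}{(q^2-q^{-2})^2}-\frac{[B_\delta,\mathcal W_n]}{(q^2-q^{-2})^2}.$$
   Context: All algebras are associative and unital over a field $\mathbb F$; $q\in\mathbb F$ is nonzero and not a root of unity. For elements $X,Y$ of an algebra, $[X,Y]=XY-YX$ and $[X,Y]_q=qXY-q^{-1}YX$. Let $\rho=-(q^2-q^{-2})^2$. The algebra $\mathcal O_q$ is defined by generators $\mathcal W_{-k},\mathcal W_{k+1},\mathcal G_{k+1},\tilde{\mathcal G}_{k+1}$ ($k\in\mathbb N$) and the following relations for all $k,\ell\in\mathbb N$: $[\mathcal W_0,\mathcal W_{k+1}]=[\mathcal W_{-k},\mathcal W_1]=(\tilde{\mathcal G}_{k+1}-\mathcal G_{k+1})/(q+q^{-1})$; $[\mathcal W_0,\mathcal G_{k+1}]_q=[\tilde{\mathcal G}_{k+1},\mathcal W_0]_q=\rho\mathcal W_{-k-1}-\rho\mathcal W_{k+1}$; $[\mathcal G_{k+1},\mathcal W_1]_q=[\mathcal W_1,\tilde{\mathcal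 G}_{k+1}]_q=\rho\mathcal W_{k+2}-\rho\mathcal W_{-k}$; $[\mathcal W_{-k},\mathcal W_{-\ell}]=0$, $[\mathcal W_{k+1},\mathcal W_{\ell+1}]=0$; $[\mathcal W_{-k},\mathcal W_{\ell+1}]+[\mathcal W_{k+1},\mathcal W_{-\ell}]=0$; $[\mathcal W_{-k},\mathcal G_{\ell+1}]+[\mathcal G_{k+1},\mathcal W_{-\ell}]=0$; $[\mathcal W_{-k},\tilde{\mathcal G}_{\ell+1}]+[\tilde{\mathcal G}_{k+1},\mathcal W_{-\ell}]=0$; $[\mathcal W_{k+1},\mathcal G_{\ell+1}]+[\mathcal G_{k+1},\mathcal W_{\ell+1}]=0$; $[\mathcal W_{k+1},\tilde{\mathcal G}_{\ell+1}]+[\tilde{\mathcal G}_{k+1},\mathcal W_{\ell+1}]=0$; $[\mathcal G_{k+1},\mathcal G_{\ell+1}]=0$, $[\tilde{\mathcal G}_{k+1},\tilde{\mathcal G}_{\ell+1}]=0$; $[\tilde{\mathcal G}_{k+1},\mathcal G_{\ell+1}]+[\mathcal G_{k+1},\tilde{\mathcal G}_{\ell+1}]=0$. *)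

theory Defs
  imports Main
begin

text \<open>An associative unital algebra over a field 'k is modelled as a ring 'a together
with a unital ring homomorphism emb from 'k into the centre of 'a
(scalar multiplication c x = emb c * x).\<close>

definition is_alg_emb :: "('k::field \<Rightarrow> 'a::ring_1) \<Rightarrow> bool" where
  "is_alg_emb emb \<longleftrightarrow> emb 1 = 1 \<and> (\<forall>a b. emb (a + b) = emb a + emb b)
     \<and> (\<forall>a b. emb (a * b) = emb a * emb b) \<and> (\<forall>c x. emb c * x = x * emb c)"

definition comm :: "'a::ring_1 \<Rightarrow> 'a \<Rightarrow> 'a" where
  "comm x y = x * y - y * x"

definition qcomm :: "('k::field \<Rightarrow> 'a::ring_1) \<Rightarrow> 'k \<Rightarrow> 'a \<Rightarrow> 'a \<Rightarrow> 'a" where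
  "qcomm emb q x y = emb q * x * y - emb (inverse q) * y * x"

definition rho :: "'k::field \<Rightarrow> 'k" where
  "rho q = - ((q ^ 2 - inverse (q ^ 2)) ^ 2)"

text \<open>Wm k = W_{-k}, Wp k = W_{k+1}, G k = G_{k+1}, Gt k = tilde G_{k+1}.\<close>
definition Oq_rels :: "('k::field \<Rightarrow> 'a::ring_1) \<Rightarrow> 'k \<Rightarrow> (nat \<Rightarrow> 'a) \<Rightarrow> (nat \<Rightarrow> 'a)
    \<Rightarrow> (nat \<Rightarrow> 'a) \<Rightarrow> (nat \<Rightarrow> 'a) \<Rightarrow> bool" where
  "Oq_rels emb q Wm Wp G Gt \<longleftrightarrow>
    (\<forall>k. comm (Wm 0) (Wp k) = emb (inverse (q + inverse q)) * (Gt k - G k)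
       \<and> comm (Wm k) (Wp 0) = emb (inverse (q + inverse q)) * (Gt k - G k))
  \<and> (\<forall>k. qcomm emb q (Wm 0) (G k) = emb (rho q) * Wm (Suc k) - emb (rho q) * Wp k
       \<and> qcomm emb q (Gt k) (Wm 0) = emb (rho q) * Wm (Suc k) - emb (rho q) * Wp k)
  \<and> (\<forall>k. qcomm emb q (G k) (Wp 0) = emb (rho q) * Wp (Suc k) - emb (rho q) * Wm k
       \<and> qcomm emb q (Wp 0) (Gt k) = emb (rho q) * Wp (Suc k) - emb (rho q) * Wm k)
  \<and> (\<forall>k l. comm (Wm k) (Wm l) = 0 \<and> comm (Wp k) (Wp l) = 0
       \<and> comm (Wm k) (Wp l) + comm (Wp k) (Wm l) = 0
       \<and> comm (Wm k) (G l) + comm (G k) (Wm l) = 0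
       \<and> comm (Wm k) (Gt l) + comm (Gt k) (Wm l) = 0
       \<and> comm (Wp k) (G l) + comm (G k) (Wp l) = 0
       \<and> comm (Wp k) (Gt l) + comm (Gt k) (Wp l) = 0
       \<and> comm (G k) (G l) = 0 \<and> comm (Gt k) (Gt l) = 0
       \<and> comm (Gt k) (G l) + comm (G k) (Gt l) = 0)"

end

theory Submission
  imports Defs
begin

text \<open>Since W_{-k} commutes with W_0, the Leibniz rule reduces [B_delta, W_{-k}] to
  q^{-2} [W_1, W_{-k}] W_0 - W_0 [W_1, W_{-k}], a multiple of the q-commutator of W_0 with
  G_{k+1} - Gt_{k+1}; the relation [W_0, G_{k+1}]_q = [Gt_{k+1}, W_0]_q collapses this to
  q^{-1} [W_0, Gt_{k+1}]. Writing [Gt_{k+1}, W_0]_q = rho (W_{-k-1} - W_{k+1}) as a multiple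
  of W_0 Gt_{k+1} plus this ordinary commutator and solving for W_{-k-1} gives the first
  identity. The second is the mirror argument with W_1, W_{k+1} in place of W_0, W_{-k}.\<close>

lemma square_minus_inverse_square_nonzero:
  fixes q :: "'k::field"
  assumes "q \<noteq> 0" and "q ^ 4 \<noteq> 1"
  shows "q^2 - inverse (q^2) \<noteq> 0"
proof
  assume "q^2 - inverse (q^2) = 0"
  then have "q^2 * q^2 = 1"
    using assms(1) by (simp add: field_simps)
  with assms(2) show False
    by (simp add: power_add[of q 2 2, symmetric])
qed

lemma plus_inverse_nonzero:
  fixes q :: "'k::field"
  assumes "q \<noteq> 0" and "q ^ 4 \<noteq> 1"
  shows "q + inverse q \<noteq> 0"
proof -
  have "q^2 - inverse (q^2) = (q + inverse q) * (q - inverse q)"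
    using assms(1) by (simp add: algebra_simps power2_eq_square power_inverse[symmetric])
  then show ?thesis
    using square_minus_inverse_square_nonzero[OF assms] by auto
qed

lemma comm_mult_left: "comm (a * b) c = a * comm b c + comm a c * b"
  unfolding comm_def by (simp add: algebra_simps)

lemma comm_diff_left: "comm (a - b) c = comm a c - comm b c"
  unfolding comm_def by (simp add: algebra_simps)

lemma comm_antisym: "comm a b = - comm b a"
  unfolding comm_def by simp

definition Bdelta :: "('k::field \<Rightarrow> 'a::ring_1) \<Rightarrow> 'k \<Rightarrow> 'a \<Rightarrow> 'a \<Rightarrow> 'a" where
  "Bdelta emb q w0 w1 = emb (inverse (q^2)) * w1 * w0 - w0 * w1"

locale alg_emb =
  fixes emb :: "'k::field \<Rightarrow> 'a::ring_1"
  assumes is_alg_emb: "is_alg_emb emb"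
begin

lemma emb_1 [simp]: "emb 1 = 1"
  and emb_add: "emb (a + b) = emb a + emb b"
  and emb_mult: "emb (a * b) = emb a * emb b"
  and emb_central: "emb c * x = x * emb c"
  using is_alg_emb unfolding is_alg_emb_def by blast+

lemma emb_0 [simp]: "emb 0 = 0"
  using emb_add[of 0 0] by simp

lemma emb_uminus: "emb (- a) = - emb a"
  using emb_add[of a "- a"] by (simp add: minus_unique)

lemma emb_diff: "emb (a - b) = emb a - emb b"
  using emb_add[of a "- b"] by (simp add: emb_uminus)

(* Not part of emb_simps: together with emb_mult_emb it loops on products of two embs,
   so proofs instantiate it at the non-scalar factor. *)
lemma mult_emb_left_commute: "x * (emb c * y) = emb c * (x * y)"
  by (metis emb_central mult.assoc)

lemma emb_mult_emb: "emb c * (emb d * x) = emb (c * d) * x"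
  by (simp add: emb_mult mult.assoc)

lemmas emb_simps = emb_mult_emb emb_add emb_diff emb_uminus

lemma emb_inverse_cancel: "c \<noteq> 0 \<Longrightarrow> emb (inverse c) * (emb c * x) = x"
  by (simp add: emb_mult_emb)

lemma comm_emb_eq_0 [simp]: "comm (emb c) x = 0"
  unfolding comm_def by (simp add: emb_central)

lemma qcomm_swap: "qcomm emb q x y - qcomm emb q y x = emb (q + inverse q) * comm x y"
  unfolding qcomm_def comm_def by (simp add: algebra_simps emb_simps)

lemma qcomm_as_comm_right:
  "qcomm emb q a b = emb (q - inverse q) * b * a + emb q * comm a b"
  unfolding qcomm_def comm_def by (simp add: algebra_simps emb_simps)

lemma qcomm_as_comm_left:
  "qcomm emb q a b = emb (q - inverse q) * a * b + emb (inverse q) * comm a b"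
  unfolding qcomm_def comm_def by (simp add: algebra_simps emb_simps)

lemma qcomm_as_inverse_square_diff:
  assumes "q \<noteq> 0"
  shows "emb q * (emb (inverse (q^2)) * y * x - x * y) = - qcomm emb q x y"
proof -
  have "q * inverse (q^2) = inverse q"
    using assms by (simp add: power2_eq_square)
  then show ?thesis
    unfolding qcomm_def
    by (simp only: right_diff_distrib mult.assoc emb_mult_emb minus_diff_eq)
qed

lemma qcomm_emb_right: "qcomm emb q x (emb c * y) = emb c * qcomm emb q x y"
  unfolding qcomm_def by (simp add: algebra_simps emb_mult_emb mult_emb_left_commute[of x])

lemma qcomm_emb_left: "qcomm emb q (emb c * x) y = emb c * qcomm emb q x y"
  unfolding qcomm_def by (simp add: algebra_simps emb_mult_emb mult_emb_left_commute[of y])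

lemma qcomm_diff_right: "qcomm emb q x (y - z) = qcomm emb q x y - qcomm emb q x z"
  unfolding qcomm_def by (simp add: algebra_simps)

lemma qcomm_diff_left: "qcomm emb q (x - y) z = qcomm emb q x z - qcomm emb q y z"
  unfolding qcomm_def by (simp add: algebra_simps)


lemma comm_Bdelta_of_comm_w0:
  assumes "q \<noteq> 0" and "q + inverse q \<noteq> 0"
    and "comm w0 x = 0"
    and "comm x w1 = emb (inverse (q + inverse q)) * (gt - g)"
    and "qcomm emb q w0 g = qcomm emb q gt w0"
  shows "emb q * comm (Bdelta emb q w0 w1) x = comm w0 gt"
proof -
  have "comm (Bdelta emb q w0 w1) x = emb (inverse (q^2)) * comm w1 x * w0 - w0 * comm w1 x"
    using assms(3) unfolding Bdelta_def
    by (simp add: comm_diff_left comm_mult_left)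
  then have "emb q * comm (Bdelta emb q w0 w1) x = - qcomm emb q w0 (comm w1 x)"
    using qcomm_as_inverse_square_diff[OF assms(1)] by simp
  also have "\<dots> = emb (inverse (q + inverse q)) * (qcomm emb q w0 gt - qcomm emb q gt w0)"
  proof -
    have w1x: "comm w1 x = emb (inverse (q + inverse q)) * (g - gt)"
      using assms(4) comm_antisym[of w1 x] by (simp add: algebra_simps)
    show ?thesis
      unfolding w1x qcomm_emb_right qcomm_diff_right assms(5) by (simp add: algebra_simps)
  qed
  also have "\<dots> = comm w0 gt"
    using assms(2) by (simp add: qcomm_swap emb_inverse_cancel)
  finally show ?thesis .
qed

lemma comm_Bdelta_of_comm_w1:
  assumes "q \<noteq> 0" and "q + inverse q \<noteq> 0"
    and "comm w1 p = 0"
    and "comm w0 p = emb (inverse (q + inverse q)) * (gt - g)"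
    and "qcomm emb q g w1 = qcomm emb q w1 gt"
  shows "emb q * comm (Bdelta emb q w0 w1) p = comm w1 gt"
proof -
  have "comm (Bdelta emb q w0 w1) p = emb (inverse (q^2)) * w1 * comm w0 p - comm w0 p * w1"
    using assms(3) unfolding Bdelta_def
    by (simp add: comm_diff_left comm_mult_left)
  then have "emb q * comm (Bdelta emb q w0 w1) p = - qcomm emb q (comm w0 p) w1"
    using qcomm_as_inverse_square_diff[OF assms(1)] by simp
  also have "\<dots> = emb (inverse (q + inverse q)) * (qcomm emb q w1 gt - qcomm emb q gt w1)"
    unfolding assms(4) qcomm_emb_left qcomm_diff_left assms(5) by (simp add: algebra_simps)
  also have "\<dots> = comm w1 gt"
    using assms(2) by (simp add: qcomm_swap emb_inverse_cancel)
  finally show ?thesis .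
qed

lemma eq_of_rho_scaled_diff:
  assumes "q^2 - inverse (q^2) \<noteq> 0" and "emb (rho q) * u - emb (rho q) * v = z"
  shows "u = v - emb (1 / (q^2 - inverse (q^2))^2) * z"
proof -
  have "1 / (q^2 - inverse (q^2))^2 * rho q = - 1"
    using assms(1) unfolding rho_def by simp
  then have "emb (1 / (q^2 - inverse (q^2))^2) * z = v - u"
    unfolding assms(2)[symmetric] by (simp add: algebra_simps emb_simps)
  then show ?thesis by simp
qed

lemma solve_qcomm_rel_swapped:
  assumes "q \<noteq> 0" and "q^2 - inverse (q^2) \<noteq> 0"
    and "qcomm emb q a x = emb (rho q) * u - emb (rho q) * v"
    and "emb q * c = comm x a"
  shows "u = v - emb ((q - inverse q) / (q^2 - inverse (q^2))^2) * x * a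
            + emb (q^2 / (q^2 - inverse (q^2))^2) * c"
proof -
  have "qcomm emb q a x = emb (q - inverse q) * x * a - emb (q^2) * c"
    unfolding qcomm_as_comm_right comm_antisym[of a] assms(4)[symmetric]
    by (simp add: emb_simps power2_eq_square)
  then show ?thesis
    unfolding eq_of_rho_scaled_diff[OF assms(2) assms(3)[symmetric]]
    by (simp add: right_diff_distrib mult.assoc emb_mult_emb diff_divide_distrib)
qed

lemma solve_qcomm_rel:
  assumes "q \<noteq> 0" and "q^2 - inverse (q^2) \<noteq> 0"
    and "qcomm emb q x a = emb (rho q) * u - emb (rho q) * v"
    and "emb q * c = comm x a"
  shows "u = v - emb ((q - inverse q) / (q^2 - inverse (q^2))^2) * x * a
            - emb (1 / (q^2 - inverse (q^2))^2) * c"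
proof -
  have "qcomm emb q x a = emb (q - inverse q) * x * a + c"
    unfolding qcomm_as_comm_left assms(4)[symmetric]
    using assms(1) by (simp add: emb_simps)
  then show ?thesis
    unfolding eq_of_rho_scaled_diff[OF assms(2) assms(3)[symmetric]]
    by (simp add: distrib_left mult.assoc emb_mult_emb diff_divide_distrib)
qed

end

theorem lemma11p5:
  fixes emb :: "'k::field \<Rightarrow> 'a::ring_1" and q :: 'k
    and Wm Wp G Gt :: "nat \<Rightarrow> 'a" and n :: nat
  assumes "is_alg_emb emb"
    and "q \<noteq> 0" and "\<forall>m::nat. m > 0 \<longrightarrow> q ^ m \<noteq> 1"
    and "Oq_rels emb q Wm Wp G Gt"
    and "n \<ge> 1"
  defines "Bd \<equiv> emb (inverse (q^2)) * Wp 0 * Wm 0 - Wm 0 * Wp 0"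
  shows "Wm n = Wp (n - 1)
            - emb ((q - inverse q) / (q^2 - inverse (q^2))^2) * Wm 0 * Gt (n - 1)
            + emb (q^2 / (q^2 - inverse (q^2))^2) * comm Bd (Wm (n - 1))
         \<and> Wp n = Wm (n - 1)
            - emb ((q - inverse q) / (q^2 - inverse (q^2))^2) * Wp 0 * Gt (n - 1)
            - emb (1 / (q^2 - inverse (q^2))^2) * comm Bd (Wp (n - 1))"
proof -
  interpret alg_emb emb by unfold_locales (fact assms(1))
  obtain k where n: "n = Suc k" using assms(5) by (cases n) auto
  have q4: "q ^ 4 \<noteq> 1" using assms(3) by simp
  note nonzero = assms(2) plus_inverse_nonzero[OF assms(2) q4]
    square_minus_inverse_square_nonzero[OF assms(2) q4]
  have Bd: "Bd = Bdelta emb q (Wm 0) (Wp 0)"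
    unfolding Bd_def Bdelta_def ..
  from assms(4) have
        Wm_W1: "comm (Wm k) (Wp 0) = emb (inverse (q + inverse q)) * (Gt k - G k)"
    and W0_Wp: "comm (Wm 0) (Wp k) = emb (inverse (q + inverse q)) * (Gt k - G k)"
    and W0_G: "qcomm emb q (Wm 0) (G k) = qcomm emb q (Gt k) (Wm 0)"
    and Wm_step: "qcomm emb q (Gt k) (Wm 0) = emb (rho q) * Wm (Suc k) - emb (rho q) * Wp k"
    and G_W1: "qcomm emb q (G k) (Wp 0) = qcomm emb q (Wp 0) (Gt k)"
    and Wp_step: "qcomm emb q (Wp 0) (Gt k) = emb (rho q) * Wp (Suc k) - emb (rho q) * Wm k"
    and W0_Wm: "comm (Wm 0) (Wm k) = 0"
    and W1_Wp: "comm (Wp 0) (Wp k) = 0"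
    unfolding Oq_rels_def by metis+
  have Wm_comm: "emb q * comm Bd (Wm k) = comm (Wm 0) (Gt k)"
    unfolding Bd by (rule comm_Bdelta_of_comm_w0[OF nonzero(1,2) W0_Wm Wm_W1 W0_G])
  have Wp_comm: "emb q * comm Bd (Wp k) = comm (Wp 0) (Gt k)"
    unfolding Bd by (rule comm_Bdelta_of_comm_w1[OF nonzero(1,2) W1_Wp W0_Wp G_W1])
  show ?thesis
    unfolding n
    using solve_qcomm_rel_swapped[OF nonzero(1,3) Wm_step Wm_comm]
      solve_qcomm_rel[OF nonzero(1,3) Wp_step Wp_comm]
    by simp
qed

end
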